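(* Let $\mathcal A$ be a $\sigma$-structure with universe $A$ and let $\mathfrak C$ be the class of all $(\sigma\cup\sigma_A)$-structures $\mathcal C$ for which $\{P_a^{\mathcal C}: a\in A\}$ is a partition of the universe of $\mathcal C$. Then $\mathsf d_{\mathcal A}=\Omega(\mathsf d_{\mathcal A^{\mathrm{id}},\mathfrak C})$.
   Context: $\sigma_A=\{P_a: a\in A\}$ is a set of new unary relation symbols, and the individualisation $\mathcal A^{\mathrm{id}}$ is the $(\sigma\cup\sigma_A)$-expansion of $\mathcal A$ with $P_a^{\mathcal A^{\mathrm{id}}}=\{a\}$. For structures $\mathcal A,\mathcal B$, $\mathsf d(\mathcal A,\mathcal B)$ is the minimum size $\|C\|$ (number of gates plus wires) of a d-representation $C$ of $\operatorname{Hom}(\mathcal A,\mathcal B)$; for a class $\mathfrak C$, $\mathsf d_{\mathcal A,\mathfrak C}(m)=\max\{\mathsf d(\mathcal A,\mathcal C):\mathcal C\in\mathfrak C,\|\mathcal C\|\le m\}$ with $\|\mathcal C\|=\sum_R|R^{\mathcal C}|$, and $\mathsf d_{\mathcal A}$ abbreviates $\mathsf d_{\mathcal A,\mathfrak C}$ for $\mathfrak C$ the class of all structures of the signature of $\mathcal A$. All structures are assumed connected. A factorisation circuit $C$ for finite sets $A,B$ is a finite directed acyclic graph with a unique sink $s$; input gates (no incoming edges) are labelled $\{a\mapsto b\}$, other nodes $\cup$ or $\times$; $\operatorname{dom}(g)$ is $\{a\}$ for an input gate and the union of the children's domains otherwise; $C$ is well-defined if each $\cup$-gate has the same domain as each child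 and children of each $\times$-gate have pairwise disjoint domains; then $S_g=\{\{a\mapsto b\}\}$ for inputs, the union of the children's sets for $\cup$-gates, and $\{h_1\cup\dots\cup h_r:h_i\in S_{g_i}\}$ for $\times$-gates, $S_C=S_s$. A d-representation of $\operatorname{Hom}(\mathcal A,\mathcal B)$ is a well-defined factorisation circuit with $S_C=\operatorname{Hom}(\mathcal A,\mathcal B)$. *)

theory Defs
  imports Main "HOL-Library.Landau_Symbols"
begin

record ('u, 'r) struct =
  univ :: "'u set"
  rel  :: "'r \<Rightarrow> 'u list set"

definition is_struct :: "'r set \<Rightarrow> ('r \<Rightarrow> nat) \<Rightarrow> ('u, 'r) struct \<Rightarrow> bool" where
  "is_struct Sig ar S \<longleftrightarrow>
     finite (univ S) \<and>
     (\<forall>R. rel S R \<subseteq> {t. length t = ar R \<and> set t \<subseteq> univ S}) \<and>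
     (\<forall>R. R \<notin> Sig \<longrightarrow> rel S R = {})"

definition ssize :: "'r set \<Rightarrow> ('u, 'r) struct \<Rightarrow> nat" where
  "ssize Sig S = (\<Sum>R\<in>Sig. card (rel S R))"

definition gaifman :: "('u, 'r) struct \<Rightarrow> ('u \<times> 'u) set" where
  "gaifman S = {(x, y). \<exists>R. \<exists>t\<in>rel S R. x \<in> set t \<and> y \<in> set t}"

definition connected_struct :: "('u, 'r) struct \<Rightarrow> bool" where
  "connected_struct S \<longleftrightarrow> univ S \<noteq> {} \<and>
     (\<forall>x\<in>univ S. \<forall>y\<in>univ S. (x, y) \<in> (gaifman S)\<^sup>*)"

definition is_hom :: "('a, 'r) struct \<Rightarrow> ('b, 'r) struct \<Rightarrow> ('a \<Rightarrow> 'b) \<Rightarrow> bool" where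
  "is_hom A B h \<longleftrightarrow> h ` univ A \<subseteq> univ B \<and>
     (\<forall>R. \<forall>t\<in>rel A R. map h t \<in> rel B R)"

definition Hom :: "('a, 'r) struct \<Rightarrow> ('b, 'r) struct \<Rightarrow> ('a \<times> 'b) set set" where
  "Hom A B = {{(a, h a) | a. a \<in> univ A} | h. is_hom A B h}"

text \<open>Signature sigma plus sigma_A: old symbols Inl R, new unary symbols P_a = Inr a.\<close>
definition sig_id :: "'r set \<Rightarrow> 'a set \<Rightarrow> ('r + 'a) set" where
  "sig_id Sig A = Inl ` Sig \<union> Inr ` A"

definition ar_id :: "('r \<Rightarrow> nat) \<Rightarrow> ('r + 'a) \<Rightarrow> nat" where
  "ar_id ar = case_sum ar (\<lambda>_. 1)"

definition indiv :: "('a, 'r) struct \<Rightarrow> ('a, 'r + 'a) struct" where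
  "indiv A = \<lparr> univ = univ A,
              rel = (\<lambda>S. case S of Inl R \<Rightarrow> rel A R
                                  | Inr a \<Rightarrow> (if a \<in> univ A then {[a]} else {})) \<rparr>"

definition Pset :: "('u, 'r + 'a) struct \<Rightarrow> 'a \<Rightarrow> 'u set" where
  "Pset C a = {x. [x] \<in> rel C (Inr a)}"

datatype ('a, 'b) glab = Inp 'a 'b | UnionG | ProdG

text \<open>Gates are natural numbers; ch g is the set of children of g (wires c \<rightarrow> g).\<close>
record ('a, 'b) fcirc =
  gates :: "nat set"
  ch    :: "nat \<Rightarrow> nat set"
  lab   :: "nat \<Rightarrow> ('a, 'b) glab"
  sink  :: nat

definition is_inp :: "('a, 'b) glab \<Rightarrow> bool" where
  "is_inp l \<longleftrightarrow> (\<exists>a b. l = Inp a b)"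

definition fcircuit :: "('a, 'b) fcirc \<Rightarrow> bool" where
  "fcircuit C \<longleftrightarrow>
     finite (gates C) \<and> sink C \<in> gates C \<and>
     (\<forall>g\<in>gates C. ch C g \<subseteq> gates C) \<and>
     (\<forall>g\<in>gates C. ch C g = {} \<longleftrightarrow> is_inp (lab C g)) \<and>
     acyclic {(c, g). g \<in> gates C \<and> c \<in> ch C g} \<and>
     (\<forall>g\<in>gates C. sink C \<notin> ch C g) \<and>
     (\<forall>g\<in>gates C. g \<noteq> sink C \<longrightarrow> (\<exists>g'\<in>gates C. g \<in> ch C g'))"

definition csize :: "('a, 'b) fcirc \<Rightarrow> nat" where
  "csize C = card (gates C) + (\<Sum>g\<in>gates C. card (ch C g))"

inductive cdom :: "('a, 'b) fcirc \<Rightarrow> nat \<Rightarrow> 'a set \<Rightarrow> bool" for C where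
  cdom_inp: "g \<in> gates C \<Longrightarrow> lab C g = Inp a b \<Longrightarrow> cdom C g {a}"
| cdom_gate: "g \<in> gates C \<Longrightarrow> \<not> is_inp (lab C g) \<Longrightarrow>
     (\<And>c. c \<in> ch C g \<Longrightarrow> cdom C c (D c)) \<Longrightarrow> cdom C g (\<Union>c\<in>ch C g. D c)"

definition gdom :: "('a, 'b) fcirc \<Rightarrow> nat \<Rightarrow> 'a set" where
  "gdom C g = (THE D. cdom C g D)"

definition well_defined :: "('a, 'b) fcirc \<Rightarrow> bool" where
  "well_defined C \<longleftrightarrow> (\<forall>g\<in>gates C.
     (lab C g = UnionG \<longrightarrow> (\<forall>c\<in>ch C g. gdom C c = gdom C g)) \<and>
     (lab C g = ProdG \<longrightarrow> (\<forall>c1\<in>ch C g. \<forall>c2\<in>ch C g. c1 \<noteq> c2 \<longrightarrow>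
                               gdom C c1 \<inter> gdom C c2 = {})))"

text \<open>Sets S_g of partial maps (represented as sets of pairs) computed by the gates.\<close>
inductive csem :: "('a, 'b) fcirc \<Rightarrow> nat \<Rightarrow> ('a \<times> 'b) set set \<Rightarrow> bool" for C where
  csem_inp: "g \<in> gates C \<Longrightarrow> lab C g = Inp a b \<Longrightarrow> csem C g {{(a, b)}}"
| csem_un: "g \<in> gates C \<Longrightarrow> lab C g = UnionG \<Longrightarrow>
     (\<And>c. c \<in> ch C g \<Longrightarrow> csem C c (S c)) \<Longrightarrow> csem C g (\<Union>c\<in>ch C g. S c)"
| csem_prod: "g \<in> gates C \<Longrightarrow> lab C g = ProdG \<Longrightarrow>
     (\<And>c. c \<in> ch C g \<Longrightarrow> csem C c (S c)) \<Longrightarrow>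
     csem C g {(\<Union>c\<in>ch C g. f c) | f. \<forall>c\<in>ch C g. f c \<in> S c}"

definition circ_set :: "('a, 'b) fcirc \<Rightarrow> ('a \<times> 'b) set set" where
  "circ_set C = (THE S. csem C (sink C) S)"

definition drep :: "('a, 'b) fcirc \<Rightarrow> ('a, 'r) struct \<Rightarrow> ('b, 'r) struct \<Rightarrow> bool" where
  "drep C A B \<longleftrightarrow> fcircuit C \<and> well_defined C \<and> circ_set C = Hom A B"

text \<open>d(A,B): minimum size of a d-representation of Hom(A,B)
  (convention: 0 if none exists, which only happens when Hom(A,B) is empty).\<close>
definition dsize :: "('a, 'r) struct \<Rightarrow> ('b, 'r) struct \<Rightarrow> nat" where
  "dsize A B = (if \<exists>C :: ('a, 'b) fcirc. drep C A B
                then LEAST n. \<exists>C :: ('a, 'b) fcirc. drep C A B \<and> csize C = n else 0)"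

text \<open>d_{A,K}(m) for a class K of (finite) structures with universes in nat;
  the maximum is taken as a supremum over a finite set of values.\<close>
definition dclass :: "'r set \<Rightarrow> ('a, 'r) struct \<Rightarrow> (nat, 'r) struct set \<Rightarrow> nat \<Rightarrow> nat" where
  "dclass Sig A K m = Sup {dsize A C | C. C \<in> K \<and> ssize Sig C \<le> m}"

definition all_structs :: "'r set \<Rightarrow> ('r \<Rightarrow> nat) \<Rightarrow> (nat, 'r) struct set" where
  "all_structs Sig ar = {C. is_struct Sig ar C \<and> connected_struct C}"

definition part_class :: "'r set \<Rightarrow> ('r \<Rightarrow> nat) \<Rightarrow> 'a set \<Rightarrow> (nat, 'r + 'a) struct set" where
  "part_class Sig ar A = {C. is_struct (sig_id Sig A) (ar_id ar) C \<and> connected_struct C \<and>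
      (\<forall>a\<in>A. Pset C a \<noteq> {}) \<and>
      (\<forall>a\<in>A. \<forall>a'\<in>A. a \<noteq> a' \<longrightarrow> Pset C a \<inter> Pset C a' = {}) \<and>
      (\<Union>a\<in>A. Pset C a) = univ C}"

end

theory Submission
  imports Defs "HOL-Library.Countable"
begin

text \<open>Every homomorphism from the individualisation of A to C is a homomorphism from A to the
  sigma-reduct of C sending each a into P_a. Hence a d-representation of Hom(A, reduct C) becomes
  one of Hom(indiv A, C) by discarding the input gates a \<mapsto> c with c outside P_a together
  with the gates that consequently compute nothing; this never increases the size. As the reduct is
  a connected sigma-structure of no larger size, every value entering the maximum defining
  d_{A^id,C}(m) is dominated by one entering d_A(m). For the latter maximum to be a genuine
  maximum, d(A, D) is bounded in terms of the size of D by a union-of-products circuit listing all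
  homomorphisms.\<close>

section \<open>Semantics of factorisation circuits\<close>

definition wires :: "('a, 'b) fcirc \<Rightarrow> (nat \<times> nat) set" where
  "wires C = {(c, g). g \<in> gates C \<and> c \<in> ch C g}"

lemma fcircuit_child_gate: "fcircuit C \<Longrightarrow> g \<in> gates C \<Longrightarrow> c \<in> ch C g \<Longrightarrow> c \<in> gates C"
  unfolding fcircuit_def by blast

lemma fcircuit_no_children_iff: "fcircuit C \<Longrightarrow> g \<in> gates C \<Longrightarrow> ch C g = {} \<longleftrightarrow> is_inp (lab C g)"
  unfolding fcircuit_def by blast

lemma fcircuit_wf_wires:
  assumes "fcircuit C"
  shows "wf (wires C)"
proof (rule finite_acyclic_wf)
  have "wires C \<subseteq> gates C \<times> gates C"
    using fcircuit_child_gate[OF assms] unfolding wires_def by blast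
  then show "finite (wires C)"
    using assms unfolding fcircuit_def by (meson finite_SigmaI finite_subset)
  show "acyclic (wires C)"
    using assms unfolding fcircuit_def wires_def by simp
qed

lemma fcircuit_gate_induct [consumes 2, case_names gate]:
  assumes "fcircuit C" and "g \<in> gates C"
    and "\<And>g. g \<in> gates C \<Longrightarrow> (\<And>c. c \<in> ch C g \<Longrightarrow> P c) \<Longrightarrow> P g"
  shows "P g"
  using assms(2)
proof (induction g rule: wf_induct[OF fcircuit_wf_wires[OF assms(1)]])
  case (1 g)
  then show ?case
    using assms(3) fcircuit_child_gate[OF assms(1)] unfolding wires_def by blast
qed

lemma csem_unique: "csem C g S \<Longrightarrow> csem C g S' \<Longrightarrow> S = S'"
proof (induction arbitrary: S' rule: csem.induct)
  case (csem_inp g a b)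
  from csem_inp.prems csem_inp.hyps show ?case
    by cases simp_all
next
  case (csem_un g S)
  note IH = csem_un.IH
  from csem_un.prems csem_un.hyps show ?case
  proof cases
    case (csem_un S')
    then have "\<forall>c\<in>ch C g. S c = S' c" using IH by blast
    then show ?thesis unfolding csem_un(1) by simp
  qed simp_all
next
  case (csem_prod g S)
  note IH = csem_prod.IH
  from csem_prod.prems csem_prod.hyps show ?case
  proof cases
    case (csem_prod S')
    then have "\<forall>c\<in>ch C g. S c = S' c" using IH by blast
    then show ?thesis unfolding csem_prod(1) by (metis (no_types, lifting))
  qed simp_all
qed

lemma cdom_unique: "cdom C g D \<Longrightarrow> cdom C g D' \<Longrightarrow> D = D'"
proof (induction arbitrary: D' rule: cdom.induct)
  case (cdom_inp g a b)
  from cdom_inp.prems cdom_inp.hyps show ?case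
    by cases (simp_all add: is_inp_def)
next
  case (cdom_gate g D)
  note IH = cdom_gate.IH
  from cdom_gate.prems cdom_gate.hyps show ?case
  proof cases
    case (cdom_gate D')
    then have "\<forall>c\<in>ch C g. D c = D' c" using IH by blast
    then show ?thesis unfolding cdom_gate(1) by simp
  qed (simp add: is_inp_def)
qed

lemma csem_exists:
  assumes "fcircuit C" and "g \<in> gates C"
  shows "\<exists>S. csem C g S"
  using assms
proof (induction rule: fcircuit_gate_induct)
  case (gate g)
  then obtain S where S: "\<And>c. c \<in> ch C g \<Longrightarrow> csem C c (S c)" by metis
  show ?case
  proof (cases "lab C g")
    case (Inp a b)
    then show ?thesis using gate.hyps by (blast intro: csem_inp)
  next
    case UnionG
    then show ?thesis using gate.hyps S by (blast intro: csem_un)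
  next
    case ProdG
    then show ?thesis using gate.hyps S by (blast intro: csem_prod)
  qed
qed

lemma cdom_exists:
  assumes "fcircuit C" and "g \<in> gates C"
  shows "\<exists>D. cdom C g D"
  using assms
proof (induction rule: fcircuit_gate_induct)
  case (gate g)
  then obtain D where D: "\<And>c. c \<in> ch C g \<Longrightarrow> cdom C c (D c)" by metis
  show ?case
  proof (cases "is_inp (lab C g)")
    case True
    then show ?thesis using gate.hyps unfolding is_inp_def by (blast intro: cdom_inp)
  next
    case False
    then show ?thesis using gate.hyps D by (blast intro: cdom_gate)
  qed
qed

definition gate_maps :: "('a, 'b) fcirc \<Rightarrow> nat \<Rightarrow> ('a \<times> 'b) set set" where
  "gate_maps C g = (THE S. csem C g S)"

lemma circ_set_eq_gate_maps: "circ_set C = gate_maps C (sink C)"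
  unfolding circ_set_def gate_maps_def ..

lemma gate_maps_eq: "csem C g S \<Longrightarrow> gate_maps C g = S"
  unfolding gate_maps_def by (rule the_equality, assumption, erule csem_unique, assumption)

lemma csem_gate_maps: "fcircuit C \<Longrightarrow> g \<in> gates C \<Longrightarrow> csem C g (gate_maps C g)"
  using csem_exists gate_maps_eq by fastforce

lemma gdom_eq: "cdom C g D \<Longrightarrow> gdom C g = D"
  unfolding gdom_def by (rule the_equality, assumption, erule cdom_unique, assumption)

lemma cdom_gdom: "fcircuit C \<Longrightarrow> g \<in> gates C \<Longrightarrow> cdom C g (gdom C g)"
  using cdom_exists gdom_eq by fastforce

lemma gate_maps_inp:
  "g \<in> gates C \<Longrightarrow> lab C g = Inp a b \<Longrightarrow> gate_maps C g = {{(a, b)}}"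
  by (rule gate_maps_eq, rule csem_inp)

lemma gate_maps_union:
  "fcircuit C \<Longrightarrow> g \<in> gates C \<Longrightarrow> lab C g = UnionG \<Longrightarrow>
    gate_maps C g = (\<Union>c\<in>ch C g. gate_maps C c)"
  by (intro gate_maps_eq csem_un) (auto intro: csem_gate_maps fcircuit_child_gate)

lemma gate_maps_prod:
  "fcircuit C \<Longrightarrow> g \<in> gates C \<Longrightarrow> lab C g = ProdG \<Longrightarrow>
    gate_maps C g = {(\<Union>c\<in>ch C g. f c) | f. \<forall>c\<in>ch C g. f c \<in> gate_maps C c}"
  by (intro gate_maps_eq csem_prod) (auto intro: csem_gate_maps fcircuit_child_gate)

lemma gdom_gate:
  "fcircuit C \<Longrightarrow> g \<in> gates C \<Longrightarrow> \<not> is_inp (lab C g) \<Longrightarrow>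
    gdom C g = (\<Union>c\<in>ch C g. gdom C c)"
  by (intro gdom_eq cdom_gate) (auto intro: cdom_gdom fcircuit_child_gate)

lemma gate_maps_nonempty:
  assumes "fcircuit C" and "g \<in> gates C"
  shows "gate_maps C g \<noteq> {}"
  using assms
proof (induction rule: fcircuit_gate_induct)
  case (gate g)
  show ?case
  proof (cases "lab C g")
    case (Inp a b)
    then show ?thesis using gate_maps_inp[OF gate.hyps] by simp
  next
    case UnionG
    then obtain c where "c \<in> ch C g"
      using fcircuit_no_children_iff[OF assms(1) gate.hyps] by (auto simp: is_inp_def)
    then show ?thesis using gate_maps_union[OF assms(1) gate.hyps UnionG] gate.IH by blast
  next
    case ProdG
    define f where "f c = (SOME G. G \<in> gate_maps C c)" for c
    have "\<forall>c\<in>ch C g. f c \<in> gate_maps C c"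
      using gate.IH unfolding f_def by (simp add: some_in_eq)
    then have "(\<Union>c\<in>ch C g. f c) \<in> gate_maps C g"
      unfolding gate_maps_prod[OF assms(1) gate.hyps ProdG] by blast
    then show ?thesis by blast
  qed
qed

lemma gate_maps_prod_singletons:
  assumes "fcircuit C" and "g \<in> gates C" and "lab C g = ProdG"
    and "\<And>c. c \<in> ch C g \<Longrightarrow> gate_maps C c = {F c}"
  shows "gate_maps C g = {\<Union>c\<in>ch C g. F c}"
proof -
  have "(\<forall>c\<in>ch C g. f c \<in> gate_maps C c) \<longleftrightarrow> (\<forall>c\<in>ch C g. f c = F c)" for f
    using assms(4) by simp
  then show ?thesis
    unfolding gate_maps_prod[OF assms(1-3)] by (auto cong: SUP_cong)
qed

section \<open>Restricting a circuit to the maps inside a set\<close>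

definition maps_within :: "('a, 'b) fcirc \<Rightarrow> ('a \<times> 'b) set \<Rightarrow> nat \<Rightarrow> ('a \<times> 'b) set set" where
  "maps_within C OK g = {G \<in> gate_maps C g. G \<subseteq> OK}"

definition live :: "('a, 'b) fcirc \<Rightarrow> ('a \<times> 'b) set \<Rightarrow> nat \<Rightarrow> bool" where
  "live C OK g \<longleftrightarrow> g \<in> gates C \<and> maps_within C OK g \<noteq> {}"

definition live_wires :: "('a, 'b) fcirc \<Rightarrow> ('a \<times> 'b) set \<Rightarrow> (nat \<times> nat) set" where
  "live_wires C OK = {(c, g) \<in> wires C. live C OK c \<and> live C OK g}"

text \<open>A gate is dead when it computes no map inside OK. Every child of a live product gate is
  live and every live union gate keeps a live child, so cutting the wires from dead gates and
  discarding what no longer reaches the sink leaves a circuit computing exactly the maps inside OK.\<close>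

definition restrict_circ :: "('a, 'b) fcirc \<Rightarrow> ('a \<times> 'b) set \<Rightarrow> ('a, 'b) fcirc" where
  "restrict_circ C OK = C\<lparr>gates := {g. (g, sink C) \<in> (live_wires C OK)\<^sup>*},
                          ch := (\<lambda>g. {c \<in> ch C g. live C OK c})\<rparr>"

lemma restrict_circ_simps [simp]:
  "gates (restrict_circ C OK) = {g. (g, sink C) \<in> (live_wires C OK)\<^sup>*}"
  "ch (restrict_circ C OK) g = {c \<in> ch C g. live C OK c}"
  "lab (restrict_circ C OK) = lab C"
  "sink (restrict_circ C OK) = sink C"
  unfolding restrict_circ_def by simp_all

lemma maps_within_inp:
  "g \<in> gates C \<Longrightarrow> lab C g = Inp a b \<Longrightarrow>
    maps_within C OK g = (if (a, b) \<in> OK then {{(a, b)}} else {})"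
  unfolding maps_within_def by (auto simp: gate_maps_inp)

lemma maps_within_union:
  "fcircuit C \<Longrightarrow> g \<in> gates C \<Longrightarrow> lab C g = UnionG \<Longrightarrow>
    maps_within C OK g = (\<Union>c\<in>ch C g. maps_within C OK c)"
  unfolding maps_within_def by (auto simp: gate_maps_union)

lemma maps_within_prod:
  assumes "fcircuit C" and "g \<in> gates C" and "lab C g = ProdG"
  shows "maps_within C OK g = {(\<Union>c\<in>ch C g. f c) | f. \<forall>c\<in>ch C g. f c \<in> maps_within C OK c}"
proof -
  have "(\<Union>c\<in>ch C g. f c) \<subseteq> OK \<longleftrightarrow> (\<forall>c\<in>ch C g. f c \<subseteq> OK)" for f
    by blast
  then show ?thesis
    unfolding maps_within_def gate_maps_prod[OF assms] by blast
qed

lemma live_union_child: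
  assumes "fcircuit C" and "live C OK g" and "lab C g = UnionG"
  obtains c where "c \<in> ch C g" and "live C OK c"
proof -
  have g: "g \<in> gates C" using assms(2) unfolding live_def by blast
  obtain c where "c \<in> ch C g" and "maps_within C OK c \<noteq> {}"
    using assms(2) unfolding live_def maps_within_union[OF assms(1) g assms(3)] by blast
  then show thesis using that fcircuit_child_gate[OF assms(1) g] unfolding live_def by blast
qed

lemma live_prod_child:
  assumes "fcircuit C" and "live C OK g" and "lab C g = ProdG" and "c \<in> ch C g"
  shows "live C OK c"
proof -
  have g: "g \<in> gates C" using assms(2) unfolding live_def by blast
  obtain G where "G \<in> maps_within C OK g" using assms(2) unfolding live_def by blast
  then obtain f where "\<forall>c\<in>ch C g. f c \<in> maps_within C OK c"
    unfolding maps_within_prod[OF assms(1) g assms(3)] by blast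
  then show ?thesis
    using assms(4) fcircuit_child_gate[OF assms(1) g] unfolding live_def by blast
qed

context
  fixes C :: "('a, 'b) fcirc" and OK :: "('a \<times> 'b) set"
  assumes circuit: "fcircuit C" and live_sink: "live C OK (sink C)"
begin

lemma live_if_restrict_gate: "g \<in> gates (restrict_circ C OK) \<Longrightarrow> live C OK g"
  using live_sink by (auto elim: converse_rtranclE simp: live_wires_def)

lemma restrict_gates_subset: "gates (restrict_circ C OK) \<subseteq> gates C"
  using live_if_restrict_gate unfolding live_def by blast

lemma restrict_child_gate:
  assumes "g \<in> gates (restrict_circ C OK)" and "c \<in> ch (restrict_circ C OK) g"
  shows "c \<in> gates (restrict_circ C OK)"
proof -
  have "(c, g) \<in> live_wires C OK"
    using assms live_if_restrict_gate[OF assms(1)] unfolding live_wires_def wires_def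
    by (simp add: live_def)
  then show ?thesis using assms(1) by (auto intro: converse_rtrancl_into_rtrancl)
qed

lemma restrict_fcircuit: "fcircuit (restrict_circ C OK)"
proof -
  let ?R = "restrict_circ C OK"
  have inp: "ch ?R g = {} \<longleftrightarrow> is_inp (lab ?R g)" if gR: "g \<in> gates ?R" for g
  proof -
    have g: "g \<in> gates C" using gR restrict_gates_subset by blast
    have live: "live C OK g" using live_if_restrict_gate[OF gR] .
    show ?thesis
    proof (cases "lab C g")
      case (Inp a b)
      then show ?thesis using fcircuit_no_children_iff[OF circuit g] by (simp add: is_inp_def)
    next
      case UnionG
      then obtain c where "c \<in> ch C g" "live C OK c" using live_union_child[OF circuit live] by blast
      then show ?thesis using UnionG by (auto simp: is_inp_def)
    next
      case ProdG
      then obtain c where "c \<in> ch C g"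
        using fcircuit_no_children_iff[OF circuit g] by (auto simp: is_inp_def)
      then show ?thesis using ProdG live_prod_child[OF circuit live] by (auto simp: is_inp_def)
    qed
  qed
  have parent: "\<exists>g'\<in>gates ?R. g \<in> ch ?R g'" if g: "g \<in> gates ?R" and ns: "g \<noteq> sink ?R" for g
  proof -
    have "(g, sink C) \<in> (live_wires C OK)\<^sup>*" using g by simp
    then obtain g' where "(g, g') \<in> live_wires C OK" "(g', sink C) \<in> (live_wires C OK)\<^sup>*"
      using ns by (auto elim: converse_rtranclE)
    then show ?thesis by (auto simp: live_wires_def wires_def)
  qed
  have "acyclic {(c, g). g \<in> gates ?R \<and> c \<in> ch ?R g}"
  proof (rule acyclic_subset)
    show "acyclic {(c, g). g \<in> gates C \<and> c \<in> ch C g}"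
      using circuit unfolding fcircuit_def by blast
  qed (use restrict_gates_subset in auto)
  moreover have "finite (gates ?R)"
    using restrict_gates_subset circuit finite_subset unfolding fcircuit_def by blast
  moreover have "\<forall>g\<in>gates ?R. sink ?R \<notin> ch ?R g"
    using circuit restrict_gates_subset unfolding fcircuit_def by auto
  moreover have "sink ?R \<in> gates ?R"
    by simp
  ultimately show ?thesis
    unfolding fcircuit_def using restrict_child_gate inp parent by blast
qed

lemma restrict_csem:
  assumes "g \<in> gates (restrict_circ C OK)"
  shows "csem (restrict_circ C OK) g (maps_within C OK g)"
proof -
  let ?R = "restrict_circ C OK"
  have "g \<in> gates C" using assms restrict_gates_subset by blast
  with circuit show ?thesis using assms
  proof (induction rule: fcircuit_gate_induct)
    case (gate g)
    have IH: "csem ?R c (maps_within C OK c)" if "c \<in> ch ?R g" for c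
      using gate that restrict_child_gate by simp
    have live: "live C OK g" using live_if_restrict_gate[OF gate.prems] .
    show ?case
    proof (cases "lab C g")
      case (Inp a b)
      then have "maps_within C OK g = {{(a, b)}}"
        using live maps_within_inp[OF gate.hyps Inp] unfolding live_def by (simp split: if_splits)
      then show ?thesis using gate.prems Inp by (simp add: csem_inp)
    next
      case UnionG
      have "(\<Union>c\<in>ch ?R g. maps_within C OK c) = maps_within C OK g"
        unfolding maps_within_union[OF circuit gate.hyps UnionG]
        using fcircuit_child_gate[OF circuit gate.hyps] by (auto simp: live_def)
      then show ?thesis using csem_un[of g ?R, OF gate.prems _ IH] UnionG by simp
    next
      case ProdG
      have "ch ?R g = ch C g" using live_prod_child[OF circuit live ProdG] by auto
      then show ?thesis
        using csem_prod[of g ?R, OF gate.prems _ IH] ProdG maps_within_prod[OF circuit gate.hyps ProdG]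
        by simp
    qed
  qed
qed

lemma restrict_csize: "csize (restrict_circ C OK) \<le> csize C"
proof -
  let ?R = "restrict_circ C OK"
  have fin: "finite (gates C)" using circuit unfolding fcircuit_def by blast
  have "card (ch ?R g) \<le> card (ch C g)" if "g \<in> gates C" for g
    using that fin fcircuit_child_gate[OF circuit] by (intro card_mono) (auto intro: finite_subset)
  then have "(\<Sum>g\<in>gates ?R. card (ch ?R g)) \<le> (\<Sum>g\<in>gates ?R. card (ch C g))"
    using restrict_gates_subset by (intro sum_mono) blast
  also have "\<dots> \<le> (\<Sum>g\<in>gates C. card (ch C g))"
    using restrict_gates_subset fin by (intro sum_mono2) auto
  finally have "(\<Sum>g\<in>gates ?R. card (ch ?R g)) \<le> (\<Sum>g\<in>gates C. card (ch C g))" .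
  moreover have "card (gates ?R) \<le> card (gates C)"
    using restrict_gates_subset fin by (rule card_mono[rotated])
  ultimately show ?thesis unfolding csize_def by linarith
qed

context
  assumes wd: "well_defined C"
begin

lemma restrict_gdom:
  assumes "g \<in> gates (restrict_circ C OK)"
  shows "gdom (restrict_circ C OK) g = gdom C g"
proof -
  let ?R = "restrict_circ C OK"
  have "g \<in> gates C" using assms restrict_gates_subset by blast
  with circuit have "cdom ?R g (gdom C g)" using assms
  proof (induction rule: fcircuit_gate_induct)
    case (gate g)
    have IH: "cdom ?R c (gdom C c)" if "c \<in> ch ?R g" for c
      using gate that restrict_child_gate by simp
    have live: "live C OK g" using live_if_restrict_gate[OF gate.prems] .
    show ?case
    proof (cases "lab C g")
      case (Inp a b)
      then show ?thesis
        using gate cdom_inp[of g ?R] gdom_eq[OF cdom_inp[of g C]] by simp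
    next
      case UnionG
      obtain c where "c \<in> ch C g" "live C OK c" using live_union_child[OF circuit live UnionG] by blast
      moreover have "\<forall>c\<in>ch C g. gdom C c = gdom C g"
        using wd gate.hyps UnionG unfolding well_defined_def by blast
      ultimately have "(\<Union>c\<in>ch ?R g. gdom C c) = gdom C g" by auto
      then show ?thesis using cdom_gate[of g ?R, OF gate.prems _ IH] UnionG by (simp add: is_inp_def)
    next
      case ProdG
      have "ch ?R g = ch C g" using live_prod_child[OF circuit live ProdG] by auto
      then show ?thesis
        using cdom_gate[of g ?R, OF gate.prems _ IH] ProdG gdom_gate[OF circuit gate.hyps]
        by (simp add: is_inp_def)
    qed
  qed
  then show ?thesis by (rule gdom_eq)
qed

lemma restrict_well_defined: "well_defined (restrict_circ C OK)"
  unfolding well_defined_def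
proof
  let ?R = "restrict_circ C OK"
  fix g assume g: "g \<in> gates ?R"
  then have "g \<in> gates C" using restrict_gates_subset by blast
  then have "(lab C g = UnionG \<longrightarrow> (\<forall>c\<in>ch C g. gdom C c = gdom C g)) \<and>
     (lab C g = ProdG \<longrightarrow> (\<forall>c1\<in>ch C g. \<forall>c2\<in>ch C g. c1 \<noteq> c2 \<longrightarrow> gdom C c1 \<inter> gdom C c2 = {}))"
    using wd unfolding well_defined_def by blast
  moreover have "gdom ?R c = gdom C c" if "c \<in> ch ?R g" for c
    using restrict_gdom restrict_child_gate[OF g that] .
  ultimately show "(lab ?R g = UnionG \<longrightarrow> (\<forall>c\<in>ch ?R g. gdom ?R c = gdom ?R g)) \<and>
     (lab ?R g = ProdG \<longrightarrow> (\<forall>c1\<in>ch ?R g. \<forall>c2\<in>ch ?R g. c1 \<noteq> c2 \<longrightarrow> gdom ?R c1 \<inter> gdom ?R c2 = {}))"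
    using restrict_gdom[OF g] by simp
qed

end

end

theorem exists_circuit_within:
  assumes "fcircuit C" and "well_defined C" and "{G \<in> circ_set C. G \<subseteq> OK} \<noteq> {}"
  shows "\<exists>C'. fcircuit C' \<and> well_defined C' \<and>
           circ_set C' = {G \<in> circ_set C. G \<subseteq> OK} \<and> csize C' \<le> csize C"
proof -
  have live: "live C OK (sink C)"
    using assms(1,3) unfolding live_def maps_within_def circ_set_eq_gate_maps fcircuit_def
    by blast
  have "circ_set (restrict_circ C OK) = maps_within C OK (sink C)"
    unfolding circ_set_eq_gate_maps
    using gate_maps_eq[OF restrict_csem[OF assms(1) live]] by simp
  then show ?thesis
    using restrict_fcircuit[OF assms(1) live] restrict_well_defined[OF assms(1) live assms(2)]
      restrict_csize[OF assms(1) live]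
    unfolding maps_within_def circ_set_eq_gate_maps by blast
qed

section \<open>A union-of-products circuit for a set of maps\<close>

datatype flat_gate = Top | Mono nat | Lit nat nat

instance flat_gate :: countable
  by countable_datatype

text \<open>Gates are elements of flat_gate numbered by to_nat: Top is the union sink, Mono i the
  product for the i-th map and Lit i j its input gate xs ! j \<mapsto> hs i (xs ! j).\<close>

definition flat_circ :: "'a list \<Rightarrow> (nat \<Rightarrow> 'a \<Rightarrow> 'b) \<Rightarrow> nat \<Rightarrow> ('a, 'b) fcirc" where
  "flat_circ xs hs n = \<lparr>
     gates = to_nat ` ({Top} \<union> Mono ` {..<n} \<union> {Lit i j | i j. i < n \<and> j < length xs}),
     ch = (\<lambda>g. to_nat ` (case from_nat g of Top \<Rightarrow> Mono ` {..<n}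
                                        | Mono i \<Rightarrow> Lit i ` {..<length xs}
                                        | Lit _ _ \<Rightarrow> {})),
     lab = (\<lambda>g. case from_nat g of Top \<Rightarrow> UnionG
                                 | Mono _ \<Rightarrow> ProdG
                                 | Lit i j \<Rightarrow> Inp (xs ! j) (hs i (xs ! j))),
     sink = to_nat Top\<rparr>"

lemma flat_circ_simps [simp]:
  "sink (flat_circ xs hs n) = to_nat Top"
  "ch (flat_circ xs hs n) (to_nat Top) = to_nat ` Mono ` {..<n}"
  "ch (flat_circ xs hs n) (to_nat (Mono i)) = to_nat ` Lit i ` {..<length xs}"
  "ch (flat_circ xs hs n) (to_nat (Lit i j)) = {}"
  "lab (flat_circ xs hs n) (to_nat Top) = UnionG"
  "lab (flat_circ xs hs n) (to_nat (Mono i)) = ProdG"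
  "lab (flat_circ xs hs n) (to_nat (Lit i j)) = Inp (xs ! j) (hs i (xs ! j))"
  "to_nat x \<in> gates (flat_circ xs hs n) \<longleftrightarrow>
     x = Top \<or> (\<exists>i<n. x = Mono i) \<or> (\<exists>i j. i < n \<and> j < length xs \<and> x = Lit i j)"
  unfolding flat_circ_def by (auto simp: inj_eq[OF inj_to_nat])

lemma flat_circ_gate_cases:
  assumes "g \<in> gates (flat_circ xs hs n)"
  obtains "g = to_nat Top"
    | i where "i < n" and "g = to_nat (Mono i)"
    | i j where "i < n" and "j < length xs" and "g = to_nat (Lit i j)"
  using assms unfolding flat_circ_def by auto

lemma flat_circ_csize:
  "csize (flat_circ xs hs n) \<le> (1 + n + n * length xs) * (1 + n + length xs)"
proof -
  let ?C = "flat_circ xs hs n" and ?k = "length xs"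
  have lits: "{Lit i j | i j. i < n \<and> j < ?k} = (\<lambda>(i, j). Lit i j) ` ({..<n} \<times> {..<?k})"
    by auto
  have "gates ?C = to_nat ` ({Top} \<union> Mono ` {..<n} \<union> {Lit i j | i j. i < n \<and> j < ?k})"
    by (simp only: flat_circ_def fcirc.select_convs)
  then have "card (gates ?C) = card ({Top} \<union> Mono ` {..<n} \<union> {Lit i j | i j. i < n \<and> j < ?k})"
    by (simp only: card_image[OF inj_on_subset[OF inj_to_nat subset_UNIV]])
  also have "\<dots> \<le> card {Top} + card (Mono ` {..<n}) + card ((\<lambda>(i, j). Lit i j) ` ({..<n} \<times> {..<?k}))"
    unfolding lits by (meson card_Un_le add_le_mono order_refl order_trans)
  also have "\<dots> \<le> 1 + n + n * ?k"
    using card_image_le[of "{..<n}" Mono] card_image_le[of "{..<n} \<times> {..<?k}" "\<lambda>(i, j). Lit i j"]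
    by (simp add: card_cartesian_product)
  finally have gates_le: "card (gates ?C) \<le> 1 + n + n * ?k" .
  have "card (ch ?C g) \<le> n + ?k" if "g \<in> gates ?C" for g
    using that
  proof (cases rule: flat_circ_gate_cases)
    case 1
    then show ?thesis by (simp add: card_image_le order_trans[OF card_image_le])
  next
    case (2 i)
    then show ?thesis by (simp add: order_trans[OF card_image_le] card_image_le)
  qed simp
  then have "(\<Sum>g\<in>gates ?C. card (ch ?C g)) \<le> card (gates ?C) * (n + ?k)"
    using sum_bounded_above[of "gates ?C" "\<lambda>g. card (ch ?C g)"] by simp
  then have "csize ?C \<le> card (gates ?C) * (1 + n + ?k)"
    unfolding csize_def by (simp add: algebra_simps)
  also have "\<dots> \<le> (1 + n + n * ?k) * (1 + n + ?k)"
    using gates_le by (rule mult_right_mono) simp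
  finally show ?thesis .
qed

context
  fixes xs :: "'a list" and hs :: "nat \<Rightarrow> 'a \<Rightarrow> 'b" and n :: nat
  assumes n_pos: "0 < n" and xs_nonempty: "xs \<noteq> []"
begin

lemma flat_circ_fcircuit: "fcircuit (flat_circ xs hs n)"
proof -
  let ?C = "flat_circ xs hs n"
  define level where
    "level g = (case from_nat g of Top \<Rightarrow> 2 | Mono _ \<Rightarrow> 1 | Lit _ _ \<Rightarrow> (0::nat))" for g
  have "finite (gates ?C)"
    unfolding flat_circ_def by (simp add: finite_image_set2)
  moreover have "\<forall>g\<in>gates ?C. ch ?C g \<subseteq> gates ?C \<and> (ch ?C g = {} \<longleftrightarrow> is_inp (lab ?C g)) \<and>
      sink ?C \<notin> ch ?C g \<and> (\<forall>c\<in>ch ?C g. level c < level g)"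
  proof
    fix g assume "g \<in> gates ?C"
    then show "ch ?C g \<subseteq> gates ?C \<and> (ch ?C g = {} \<longleftrightarrow> is_inp (lab ?C g)) \<and>
      sink ?C \<notin> ch ?C g \<and> (\<forall>c\<in>ch ?C g. level c < level g)"
      by (cases rule: flat_circ_gate_cases)
        (use n_pos xs_nonempty in \<open>auto simp: is_inp_def level_def\<close>)
  qed
  moreover have "\<forall>g\<in>gates ?C. g \<noteq> sink ?C \<longrightarrow> (\<exists>g'\<in>gates ?C. g \<in> ch ?C g')"
  proof (intro ballI impI)
    fix g assume "g \<in> gates ?C" and "g \<noteq> sink ?C"
    then show "\<exists>g'\<in>gates ?C. g \<in> ch ?C g'"
    proof (cases rule: flat_circ_gate_cases)
      case (2 i)
      then show ?thesis using n_pos by (intro bexI[of _ "to_nat Top"]) auto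
    next
      case (3 i j)
      then show ?thesis by (intro bexI[of _ "to_nat (Mono i)"]) auto
    qed simp
  qed
  moreover have "acyclic (inv_image less_than level)"
    by (rule wf_acyclic) simp
  ultimately show ?thesis
    unfolding fcircuit_def by (auto intro: acyclic_subset)
qed

lemma flat_circ_gdom_Mono:
  assumes "i < n"
  shows "gdom (flat_circ xs hs n) (to_nat (Mono i)) = set xs"
proof -
  have "gdom (flat_circ xs hs n) (to_nat (Lit i j)) = {xs ! j}" if "j < length xs" for j
    using assms that by (intro gdom_eq cdom_inp) auto
  then show ?thesis
    using assms gdom_gate[OF flat_circ_fcircuit, of "to_nat (Mono i)"]
    by (auto simp: is_inp_def in_set_conv_nth)
qed

lemma flat_circ_well_defined:
  assumes "distinct xs"
  shows "well_defined (flat_circ xs hs n)"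
  unfolding well_defined_def
proof
  let ?C = "flat_circ xs hs n"
  have gdom_Lit: "gdom ?C (to_nat (Lit i j)) = {xs ! j}" if "i < n" "j < length xs" for i j
    using that by (intro gdom_eq cdom_inp) auto
  have gdom_Top: "gdom ?C (to_nat Top) = set xs"
    using gdom_gate[OF flat_circ_fcircuit, of "to_nat Top"] n_pos flat_circ_gdom_Mono
    by (auto simp: is_inp_def)
  fix g assume "g \<in> gates ?C"
  then show "(lab ?C g = UnionG \<longrightarrow> (\<forall>c\<in>ch ?C g. gdom ?C c = gdom ?C g)) \<and>
     (lab ?C g = ProdG \<longrightarrow> (\<forall>c1\<in>ch ?C g. \<forall>c2\<in>ch ?C g. c1 \<noteq> c2 \<longrightarrow> gdom ?C c1 \<inter> gdom ?C c2 = {}))"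
    by (cases rule: flat_circ_gate_cases)
      (use assms gdom_Top gdom_Lit flat_circ_gdom_Mono in \<open>auto simp: nth_eq_iff_index_eq\<close>)
qed

lemma flat_circ_circ_set: "circ_set (flat_circ xs hs n) = {{(a, hs i a) | a. a \<in> set xs} | i. i < n}"
proof -
  let ?C = "flat_circ xs hs n"
  define lit where
    "lit c = (case from_nat c of Lit i j \<Rightarrow> {(xs ! j, hs i (xs ! j))} | _ \<Rightarrow> {})" for c
  have Mono: "gate_maps ?C (to_nat (Mono i)) = {{(a, hs i a) | a. a \<in> set xs}}" if "i < n" for i
  proof -
    have "gate_maps ?C c = {lit c}" if c: "c \<in> ch ?C (to_nat (Mono i))" for c
    proof -
      obtain j where "j < length xs" and "c = to_nat (Lit i j)" using c by auto
      then show ?thesis using \<open>i < n\<close> by (simp add: lit_def gate_maps_inp)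
    qed
    then have "gate_maps ?C (to_nat (Mono i)) = {\<Union>c\<in>ch ?C (to_nat (Mono i)). lit c}"
      using \<open>i < n\<close> by (intro gate_maps_prod_singletons[OF flat_circ_fcircuit]) auto
    also have "(\<Union>c\<in>ch ?C (to_nat (Mono i)). lit c) = {(a, hs i a) | a. a \<in> set xs}"
      by (auto simp: lit_def in_set_conv_nth)
    finally show ?thesis .
  qed
  have "gate_maps ?C (to_nat Top) = (\<Union>c\<in>ch ?C (to_nat Top). gate_maps ?C c)"
    by (rule gate_maps_union[OF flat_circ_fcircuit]) (use n_pos in auto)
  also have "\<dots> = {{(a, hs i a) | a. a \<in> set xs} | i. i < n}"
    using Mono by auto
  finally show ?thesis by (simp add: circ_set_eq_gate_maps)
qed

end

theorem exists_circuit_for_graphs: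
  assumes "finite X" and "X \<noteq> {}" and "finite H" and "H \<noteq> {}"
    and "\<forall>G\<in>H. \<exists>h. G = {(a, h a) | a. a \<in> X}"
  shows "\<exists>C :: ('a, 'b) fcirc. fcircuit C \<and> well_defined C \<and> circ_set C = H \<and>
           csize C \<le> (1 + card H + card H * card X) * (1 + card H + card X)"
proof -
  obtain xs where xs: "set xs = X" "distinct xs" using finite_distinct_list[OF assms(1)] by blast
  obtain Gs where Gs: "set Gs = H" "distinct Gs" using finite_distinct_list[OF assms(3)] by blast
  define hs where "hs i = (SOME h. Gs ! i = {(a, h a) | a. a \<in> X})" for i
  have "Gs ! i = {(a, hs i a) | a. a \<in> set xs}" if "i < length Gs" for i
  proof -
    have "Gs ! i \<in> H" using Gs(1) that by auto
    then have "\<exists>h. Gs ! i = {(a, h a) | a. a \<in> X}" using assms(5) by blast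
    then show ?thesis unfolding hs_def xs(1) by (rule someI_ex)
  qed
  then have "{{(a, hs i a) | a. a \<in> set xs} | i. i < length Gs} = {Gs ! i | i. i < length Gs}"
    by (intro Collect_cong) blast
  then have graphs: "{{(a, hs i a) | a. a \<in> set xs} | i. i < length Gs} = H"
    using Gs(1) by (simp add: set_conv_nth)
  have n: "0 < length Gs" and xs_ne: "xs \<noteq> []"
    using assms(2,4) xs(1) Gs(1) by auto
  have "card H = length Gs" and "card X = length xs"
    using distinct_card[OF Gs(2)] distinct_card[OF xs(2)] Gs(1) xs(1) by simp_all
  then have "csize (flat_circ xs hs (length Gs)) \<le> (1 + card H + card H * card X) * (1 + card H + card X)"
    using flat_circ_csize by simp
  then show ?thesis
    using flat_circ_fcircuit[OF n xs_ne] flat_circ_well_defined[OF n xs_ne xs(2)]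
      flat_circ_circ_set[OF n xs_ne] graphs
    by metis
qed

section \<open>Structures and individualisation\<close>

text \<open>In a connected structure with at least two elements every element occurs in some tuple.\<close>

lemma card_univ_le_ssize:
  assumes "finite Sig" and "is_struct Sig ar D" and "connected_struct D"
  shows "card (univ D) \<le> 1 + ssize Sig D * (\<Sum>R\<in>Sig. ar R)"
proof (cases "card (univ D) \<le> 1")
  case False
  let ?M = "\<Sum>R\<in>Sig. ar R"
  have rel_sub: "rel D R \<subseteq> {t. length t = ar R \<and> set t \<subseteq> univ D}"
    and rel_empty: "R \<notin> Sig \<Longrightarrow> rel D R = {}" for R
    using assms(2) unfolding is_struct_def by blast+
  have fin_rel: "finite (rel D R)" for R
  proof (rule finite_subset[OF rel_sub])
    show "finite {t. length t = ar R \<and> set t \<subseteq> univ D}"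
      using assms(2) finite_lists_length_eq[of "univ D" "ar R"]
      unfolding is_struct_def by (simp add: conj_commute)
  qed
  have "univ D \<subseteq> (\<Union>R\<in>Sig. \<Union>t\<in>rel D R. set t)"
  proof
    fix x assume x: "x \<in> univ D"
    have "\<not> univ D \<subseteq> {x}" using False card_mono[of "{x}" "univ D"] by auto
    then obtain y where y: "y \<in> univ D" "y \<noteq> x" by blast
    then have "(x, y) \<in> (gaifman D)\<^sup>*" using assms(3) x unfolding connected_struct_def by blast
    then obtain z where "(x, z) \<in> gaifman D"
      using y(2) by (auto elim: converse_rtranclE)
    then obtain R t where "t \<in> rel D R" "x \<in> set t" unfolding gaifman_def by blast
    then show "x \<in> (\<Union>R\<in>Sig. \<Union>t\<in>rel D R. set t)" using rel_empty by blast
  qed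
  then have "card (univ D) \<le> card (\<Union>R\<in>Sig. \<Union>t\<in>rel D R. set t)"
    using assms(1) fin_rel by (intro card_mono) auto
  also have "\<dots> \<le> (\<Sum>R\<in>Sig. \<Sum>t\<in>rel D R. card (set t))"
    using assms(1) by (intro order_trans[OF card_UN_le] sum_mono card_UN_le fin_rel)
  also have "\<dots> \<le> (\<Sum>R\<in>Sig. card (rel D R) * ?M)"
  proof (intro sum_mono)
    fix R assume R: "R \<in> Sig"
    have "card (set t) \<le> ?M" if "t \<in> rel D R" for t
      using card_length[of t] rel_sub that member_le_sum[OF R _ assms(1), of ar] by fastforce
    then show "(\<Sum>t\<in>rel D R. card (set t)) \<le> card (rel D R) * ?M"
      using sum_bounded_above[of "rel D R" "\<lambda>t. card (set t)" ?M] by simp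
  qed
  also have "\<dots> = ssize Sig D * ?M" unfolding ssize_def by (simp add: sum_distrib_right)
  finally show ?thesis by simp
qed simp

definition reduct :: "('u, 'r + 'a) struct \<Rightarrow> ('u, 'r) struct" where
  "reduct C = \<lparr>univ = univ C, rel = (\<lambda>R. rel C (Inl R))\<rparr>"

lemma reduct_simps [simp]: "univ (reduct C) = univ C" "rel (reduct C) R = rel C (Inl R)"
  unfolding reduct_def by simp_all

lemma reduct_is_struct:
  "is_struct (sig_id Sig A) (ar_id ar) C \<Longrightarrow> is_struct Sig ar (reduct C)"
  unfolding is_struct_def sig_id_def ar_id_def by force

lemma gaifman_subset_reduct:
  assumes "is_struct (sig_id Sig A) (ar_id ar) C"
  shows "gaifman C \<subseteq> gaifman (reduct C) \<union> Id"
proof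
  fix p assume "p \<in> gaifman C"
  then obtain x y S t where p: "p = (x, y)" "t \<in> rel C S" "x \<in> set t" "y \<in> set t"
    unfolding gaifman_def by blast
  show "p \<in> gaifman (reduct C) \<union> Id"
  proof (cases S)
    case (Inl R)
    then show ?thesis using p unfolding gaifman_def by auto
  next
    case (Inr a)
    have "rel C S \<subseteq> {t. length t = ar_id ar S \<and> set t \<subseteq> univ C}"
      using assms unfolding is_struct_def by blast
    then have "length t = 1"
      using p(2) Inr unfolding ar_id_def by auto
    then show ?thesis using p by (auto simp: length_Suc_conv)
  qed
qed

lemma reduct_connected:
  assumes "is_struct (sig_id Sig A) (ar_id ar) C" and "connected_struct C"
  shows "connected_struct (reduct C)"
proof -
  have "(gaifman C)\<^sup>* \<subseteq> (gaifman (reduct C))\<^sup>*"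
    using rtrancl_mono[OF gaifman_subset_reduct[OF assms(1)]] by simp
  then show ?thesis using assms(2) unfolding connected_struct_def by auto
qed

lemma ssize_reduct_le:
  assumes "finite Sig" and "finite A"
  shows "ssize Sig (reduct C) \<le> ssize (sig_id Sig A) C"
proof -
  have "ssize Sig (reduct C) = (\<Sum>S\<in>Inl ` Sig. card (rel C S))"
    unfolding ssize_def by (simp add: sum.reindex)
  also have "\<dots> \<le> ssize (sig_id Sig A) C"
    unfolding ssize_def sig_id_def using assms by (intro sum_mono2) auto
  finally show ?thesis .
qed

lemma is_hom_indiv_iff:
  "is_hom (indiv A) C h \<longleftrightarrow> is_hom A (reduct C) h \<and> (\<forall>a\<in>univ A. h a \<in> Pset C a)"
proof -
  have "(\<forall>S. \<forall>t\<in>rel (indiv A) S. map h t \<in> rel C S) \<longleftrightarrow>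
      (\<forall>R. \<forall>t\<in>rel A R. map h t \<in> rel C (Inl R)) \<and> (\<forall>a\<in>univ A. [h a] \<in> rel C (Inr a))"
    by (auto simp: indiv_def split: sum.split)
  then show ?thesis unfolding is_hom_def Pset_def by (simp add: indiv_def)
qed

lemma Hom_indiv: "Hom (indiv A) C = {G \<in> Hom A (reduct C). G \<subseteq> {(a, c). c \<in> Pset C a}}"
proof -
  have "{(a, h a) | a. a \<in> univ A} \<subseteq> {(a, c). c \<in> Pset C a} \<longleftrightarrow> (\<forall>a\<in>univ A. h a \<in> Pset C a)"
    for h by blast
  then show ?thesis unfolding Hom_def is_hom_indiv_iff by (auto simp: indiv_def)
qed

lemma drep_Hom_nonempty: "drep C A B \<Longrightarrow> Hom A B \<noteq> {}"
  using gate_maps_nonempty[of C "sink C"] unfolding drep_def fcircuit_def circ_set_eq_gate_maps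
  by auto

lemma card_Hom_le:
  assumes "finite (univ A)" and "finite (univ B)"
  shows "card (Hom A B) \<le> 2 ^ (card (univ A) * card (univ B))"
proof -
  have "Hom A B \<subseteq> Pow (univ A \<times> univ B)" unfolding Hom_def is_hom_def by blast
  then have "card (Hom A B) \<le> card (Pow (univ A \<times> univ B))"
    using assms by (intro card_mono) auto
  then show ?thesis using assms by (simp add: card_Pow card_cartesian_product)
qed

lemma exists_drep:
  assumes "finite (univ A)" and "univ A \<noteq> {}" and "finite (univ B)" and "Hom A B \<noteq> {}"
  shows "\<exists>C :: ('a, 'b) fcirc. drep C A B \<and>
    csize C \<le> (1 + card (Hom A B) + card (Hom A B) * card (univ A)) * (1 + card (Hom A B) + card (univ A))"
proof -
  have "Hom A B \<subseteq> Pow (univ A \<times> univ B)" unfolding Hom_def is_hom_def by blast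
  then have "finite (Hom A B)" using assms(1,3) by (auto intro: finite_subset)
  moreover have "\<forall>G\<in>Hom A B. \<exists>h. G = {(a, h a) | a. a \<in> univ A}" unfolding Hom_def by blast
  ultimately show ?thesis
    using exists_circuit_for_graphs[OF assms(1,2) _ assms(4)] unfolding drep_def by blast
qed

lemma dsize_le_csize: "drep C A B \<Longrightarrow> dsize A B \<le> csize C"
  unfolding dsize_def by (auto intro: Least_le)

lemma dsize_attained:
  assumes "drep C A B"
  obtains C' where "drep C' A B" and "csize C' = dsize A B"
proof -
  have "\<exists>n C. drep C A B \<and> csize C = n" using assms by blast
  then have "\<exists>C. drep C A B \<and> csize C = (LEAST n. \<exists>C. drep C A B \<and> csize C = n)"
    by (rule LeastI_ex)
  moreover have "dsize A B = (LEAST n. \<exists>C. drep C A B \<and> csize C = n)"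
    unfolding dsize_def using assms by auto
  ultimately show thesis using that by metis
qed

text \<open>Restricting an optimal d-representation of Hom(A, reduct C) to the maps sending every a
  into P_a yields one of Hom(indiv A, C).\<close>

lemma dsize_indiv_le_dsize_reduct:
  fixes A :: "('a, 'r) struct" and C :: "('u, 'r + 'a) struct"
  assumes "finite (univ A)" and "univ A \<noteq> {}" and "finite (univ C)"
  shows "dsize (indiv A) C \<le> dsize A (reduct C)"
proof (cases "\<exists>C1 :: ('a, 'u) fcirc. drep C1 (indiv A) C")
  case True
  let ?OK = "{(a, c). c \<in> Pset C a}"
  have "Hom (indiv A) C \<noteq> {}" using True drep_Hom_nonempty by blast
  then have "Hom A (reduct C) \<noteq> {}" by (auto simp: Hom_indiv)
  then obtain C0 :: "('a, 'u) fcirc" where "drep C0 A (reduct C)"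
    using exists_drep[OF assms(1,2), of "reduct C"] assms(3) by auto
  then obtain C2 :: "('a, 'u) fcirc" where C2: "drep C2 A (reduct C)" "csize C2 = dsize A (reduct C)"
    by (rule dsize_attained)
  have within: "{G \<in> circ_set C2. G \<subseteq> ?OK} = Hom (indiv A) C"
    using C2(1) by (simp add: drep_def Hom_indiv)
  obtain C' where "drep C' (indiv A) C" and "csize C' \<le> csize C2"
    using exists_circuit_within[of C2 ?OK] C2(1) within \<open>Hom (indiv A) C \<noteq> {}\<close>
    unfolding drep_def by auto
  then show ?thesis using C2(2) dsize_le_csize order_trans by metis
qed (simp add: dsize_def)

lemma bdd_above_dsize_all_structs:
  fixes A :: "('a, 'r) struct"
  assumes "finite Sig" and "finite (univ A)" and "univ A \<noteq> {}"
  shows "bdd_above {dsize A D | D. D \<in> all_structs Sig ar \<and> ssize Sig D \<le> m}"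
proof -
  define N :: nat where "N = 2 ^ (card (univ A) * (1 + m * (\<Sum>R\<in>Sig. ar R)))"
  have "dsize A D \<le> (1 + N + N * card (univ A)) * (1 + N + card (univ A))"
    if D: "D \<in> all_structs Sig ar" "ssize Sig D \<le> m" for D
  proof (cases "Hom A D = {}")
    case True
    then show ?thesis using drep_Hom_nonempty unfolding dsize_def by auto
  next
    case False
    have struct: "is_struct Sig ar D" and "connected_struct D"
      using D(1) unfolding all_structs_def by auto
    then have "card (univ D) \<le> 1 + m * (\<Sum>R\<in>Sig. ar R)"
      using card_univ_le_ssize[OF assms(1)] D(2) mult_right_mono order_trans by fastforce
    then have "card (Hom A D) \<le> N"
      using card_Hom_le[OF assms(2)] struct unfolding N_def is_struct_def
      by (meson le_trans mult_le_mono2 one_le_numeral power_increasing)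
    moreover obtain C :: "('a, nat) fcirc" where "drep C A D" and
      "csize C \<le> (1 + card (Hom A D) + card (Hom A D) * card (univ A)) * (1 + card (Hom A D) + card (univ A))"
      using exists_drep[OF assms(2,3) _ False] struct unfolding is_struct_def by blast
    ultimately show ?thesis
      using dsize_le_csize[of C A D] by (meson add_le_mono le_refl mult_le_mono order_trans)
  qed
  then show ?thesis by (intro bdd_aboveI) blast
qed

lemma dclass_indiv_le:
  assumes "finite Sig" and "is_struct Sig ar A" and "connected_struct A"
  shows "dclass (sig_id Sig (univ A)) (indiv A) (part_class Sig ar (univ A)) m
           \<le> dclass Sig A (all_structs Sig ar) m"
proof -
  let ?P = "{dsize (indiv A) C | C. C \<in> part_class Sig ar (univ A) \<and> ssize (sig_id Sig (univ A)) C \<le> m}"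
  let ?D = "{dsize A D | D. D \<in> all_structs Sig ar \<and> ssize Sig D \<le> m}"
  have fin: "finite (univ A)" and nonempty: "univ A \<noteq> {}"
    using assms(2,3) unfolding is_struct_def connected_struct_def by auto
  have below: "\<exists>d\<in>?D. p \<le> d" if "p \<in> ?P" for p
  proof -
    obtain C where C: "p = dsize (indiv A) C" "C \<in> part_class Sig ar (univ A)"
        "ssize (sig_id Sig (univ A)) C \<le> m"
      using \<open>p \<in> ?P\<close> by blast
    have struct: "is_struct (sig_id Sig (univ A)) (ar_id ar) C" and "connected_struct C"
      using C(2) unfolding part_class_def by auto
    then have "reduct C \<in> all_structs Sig ar"
      unfolding all_structs_def using reduct_is_struct reduct_connected by blast
    moreover have "ssize Sig (reduct C) \<le> m"
      using ssize_reduct_le[OF assms(1) fin, of C] C(3) by linarith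
    moreover have "finite (univ C)"
      using struct unfolding is_struct_def by blast
    then have "p \<le> dsize A (reduct C)"
      using C(1) dsize_indiv_le_dsize_reduct[OF fin nonempty] by simp
    ultimately show ?thesis by blast
  qed
  have "Sup ?P \<le> Sup ?D"
  proof (cases "?P = {}")
    case True
    then show ?thesis by (simp only: Sup_nat_empty le0)
  next
    case False
    show ?thesis
      by (rule cSup_mono[OF False bdd_above_dsize_all_structs[OF assms(1) fin nonempty] below])
  qed
  then show ?thesis unfolding dclass_def .
qed

theorem lemma6p3:
  fixes Sig :: "'r set" and ar :: "'r \<Rightarrow> nat" and \<A> :: "('a, 'r) struct"
  assumes "finite Sig"
    and "is_struct Sig ar \<A>"
    and "connected_struct \<A>"
  shows "(\<lambda>m. real (dclass Sig \<A> (all_structs Sig ar) m))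
           \<in> \<Omega>(\<lambda>m. real (dclass (sig_id Sig (univ \<A>)) (indiv \<A>)
                                 (part_class Sig ar (univ \<A>)) m))"
  unfolding bigomega_iff_bigo
  using dclass_indiv_le[OF assms] by (intro landau_o.bigI[of 1] always_eventually) auto

end
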